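(* For every $n \geq 1$, $c(\Gamma_n) \geq \left\lfloor \frac{n+5}{6} \right\rfloor$ and $c(\Lambda_n) \geq \left\lfloor \frac{n+5}{6} \right\rfloor$.
   Context: The Fibonacci cube $\Gamma_n$ is the subgraph of the hypercube $Q_n$ (vertex set $\{0,1\}^n$, adjacency = differing in exactly one position) induced by all binary strings of length $n$ containing no two consecutive 1's. The Lucas cube $\Lambda_n$ is the subgraph of $Q_n$ induced by all binary strings $x_1\cdots x_n$ with no two consecutive 1's and not having both $x_1 = 1$ and $x_n = 1$. Cops and Robbers: $k$ cops choose starting vertices, then the robber does; in each round all cops move (to a neighbor or stay), then the robber moves (to a neighbor or stays); cops win if some cop occupies the robber's vertex. The cop number $c(G)$ is the minimum $k$ for which the cops can guarantee capture. *)

theory Defs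
  imports Main
begin

definition hamming1 :: "bool list \<Rightarrow> bool list \<Rightarrow> bool" where
  "hamming1 x y \<longleftrightarrow> length x = length y \<and> card {i. i < length x \<and> x ! i \<noteq> y ! i} = 1"

definition induced_cube_adj :: "bool list set \<Rightarrow> bool list \<Rightarrow> bool list \<Rightarrow> bool" where
  "induced_cube_adj V x y \<longleftrightarrow> x \<in> V \<and> y \<in> V \<and> hamming1 x y"

definition fib_vertices :: "nat \<Rightarrow> bool list set" where
  "fib_vertices n = {x. length x = n \<and> (\<forall>i. i + 1 < n \<longrightarrow> \<not> (x ! i \<and> x ! (i + 1)))}"

definition lucas_vertices :: "nat \<Rightarrow> bool list set" where
  "lucas_vertices n = {x. x \<in> fib_vertices n \<and> \<not> (x ! 0 \<and> x ! (n - 1))}"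

text \<open>cops_win_from E C r: it is the cops' turn to move, the cops stand at C
  (one list entry per cop), the robber at r; the cops can force a capture in
  finitely many rounds.\<close>
inductive cops_win_from :: "('a \<Rightarrow> 'a \<Rightarrow> bool) \<Rightarrow> 'a list \<Rightarrow> 'a \<Rightarrow> bool"
  for E :: "'a \<Rightarrow> 'a \<Rightarrow> bool" where
  caught: "r \<in> set C \<Longrightarrow> cops_win_from E C r"
| move: "list_all2 (\<lambda>c c'. c' = c \<or> E c c') C C' \<Longrightarrow>
         (r \<in> set C' \<or> (\<forall>r'. (r' = r \<or> E r r') \<longrightarrow> cops_win_from E C' r')) \<Longrightarrow>
         cops_win_from E C r"

definition cops_win :: "'a set \<Rightarrow> ('a \<Rightarrow> 'a \<Rightarrow> bool) \<Rightarrow> nat \<Rightarrow> bool" where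
  "cops_win V E k \<longleftrightarrow> (\<exists>C. length C = k \<and> set C \<subseteq> V \<and> (\<forall>r\<in>V. cops_win_from E C r))"

definition cop_number :: "'a set \<Rightarrow> ('a \<Rightarrow> 'a \<Rightarrow> bool) \<Rightarrow> nat" where
  "cop_number V E = (LEAST k. cops_win V E k)"

end

theory Submission
  imports Defs
begin

text \<open>Strings of length \<open>n\<close> whose 1s lie at even positions \<open>i\<close> with \<open>i + 1 < n\<close> form a copy of
  the hypercube of dimension \<open>n div 2\<close> inside both \<open>\<Gamma>\<^sub>n\<close> and \<open>\<Lambda>\<^sub>n\<close>. Against \<open>k\<close> cops with
  \<open>2k < n div 2\<close>, the robber can stay in this cube at Hamming distance at least 2 from every
  cop: a cop at distance at most 2 forbids flipping at most 2 coordinates, so some free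
  coordinate remains, and flipping it moves the robber away from the near cops while the far
  ones come at most one step closer. Hence the cop number is at least \<open>(n div 2 + 1) div 2\<close>,
  and at least 1 in any case, which dominates \<open>(n + 5) div 6\<close>.\<close>

lemma list_all2_set2_ex: "list_all2 R xs ys \<Longrightarrow> y \<in> set ys \<Longrightarrow> \<exists>x\<in>set xs. R x y"
  by (metis in_set_conv_nth list_all2_conv_all_nth)

lemma not_cops_win_from_if_invariant:
  assumes "I C r"
    and not_caught: "\<And>C r. I C r \<Longrightarrow> r \<notin> set C"
    and evade: "\<And>C C' r. I C r \<Longrightarrow> list_all2 (\<lambda>c c'. c' = c \<or> E c c') C C' \<Longrightarrow>
      r \<notin> set C' \<and> (\<exists>r'. (r' = r \<or> E r r') \<and> I C' r')"
  shows "\<not> cops_win_from E C r"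
proof
  assume "cops_win_from E C r"
  then show False
    using \<open>I C r\<close>
  proof (induction rule: cops_win_from.induct)
    case (caught r C)
    then show ?case using not_caught by blast
  next
    case (move C C' r)
    obtain r' where "r' = r \<or> E r r'" "I C' r'" and "r \<notin> set C'"
      using evade[OF \<open>I C r\<close> move.hyps(1)] by blast
    then show ?case using move.IH by blast
  qed
qed

lemma not_cops_win_if_invariant:
  assumes start: "\<And>C. length C = k \<Longrightarrow> set C \<subseteq> V \<Longrightarrow> \<exists>r\<in>V. I C r"
    and not_caught: "\<And>C r. I C r \<Longrightarrow> r \<notin> set C"
    and evade: "\<And>C C' r. I C r \<Longrightarrow> list_all2 (\<lambda>c c'. c' = c \<or> E c c') C C' \<Longrightarrow>
      r \<notin> set C' \<and> (\<exists>r'. (r' = r \<or> E r r') \<and> I C' r')"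
  shows "\<not> cops_win V E k"
proof
  assume "cops_win V E k"
  then obtain C where C: "length C = k" "set C \<subseteq> V" "\<forall>r\<in>V. cops_win_from E C r"
    unfolding cops_win_def by blast
  then obtain r where "r \<in> V" "I C r"
    using start by blast
  moreover have "\<not> cops_win_from E C r"
    using \<open>I C r\<close> not_caught evade by (rule not_cops_win_from_if_invariant)
  ultimately show False
    using C(3) by blast
qed

lemma not_cops_win_zero: "V \<noteq> {} \<Longrightarrow> \<not> cops_win V E 0"
  by (rule not_cops_win_if_invariant[where I = "\<lambda>C r. C = []"]) auto

lemma cops_win_card:
  assumes "finite V"
  shows "cops_win V E (card V)"
proof -
  obtain xs where "set xs = V" "distinct xs"
    using finite_distinct_list[OF assms] by blast
  then show ?thesis
    unfolding cops_win_def by (metis distinct_card order_refl cops_win_from.caught)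
qed

lemma le_cop_number:
  assumes "finite V" and "\<And>k. k < m \<Longrightarrow> \<not> cops_win V E k"
  shows "m \<le> cop_number V E"
proof -
  have "cops_win V E (cop_number V E)"
    unfolding cop_number_def using cops_win_card[OF \<open>finite V\<close>] by (rule LeastI)
  then show ?thesis using assms(2) not_le by blast
qed

lemma one_le_cop_number: "finite V \<Longrightarrow> V \<noteq> {} \<Longrightarrow> 1 \<le> cop_number V E"
  using le_cop_number not_cops_win_zero by (metis less_one)

definition mismatches :: "'a list \<Rightarrow> 'a list \<Rightarrow> nat set" where
  "mismatches x y = {i. i < length x \<and> x ! i \<noteq> y ! i}"

definition hamming_dist :: "'a list \<Rightarrow> 'a list \<Rightarrow> nat" where
  "hamming_dist x y = card (mismatches x y)"

lemma finite_mismatches [simp]: "finite (mismatches x y)"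
  by (simp add: mismatches_def)

lemma hamming1_iff: "hamming1 x y \<longleftrightarrow> length x = length y \<and> hamming_dist x y = 1"
  by (simp add: hamming1_def hamming_dist_def mismatches_def)

lemma hamming_dist_self [simp]: "hamming_dist x x = 0"
  by (simp add: hamming_dist_def mismatches_def)

lemma hamming_dist_commute: "length x = length y \<Longrightarrow> hamming_dist x y = hamming_dist y x"
  unfolding hamming_dist_def mismatches_def by (metis)

lemma hamming_dist_pos: "length x = length y \<Longrightarrow> x \<noteq> y \<Longrightarrow> 0 < hamming_dist x y"
  unfolding hamming_dist_def mismatches_def
  by (auto simp: card_gt_0_iff intro: nth_equalityI)

lemma hamming_dist_le_1_if_step: "c' = c \<or> hamming1 c c' \<Longrightarrow> hamming_dist c' c \<le> 1"
  using hamming_dist_commute[of c c'] by (auto simp: hamming1_iff)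

lemma mismatches_flip:
  assumes "j < length v"
  shows "mismatches (v[j := \<not> v ! j]) c =
    (if v ! j = c ! j then insert j (mismatches v c) else mismatches v c - {j})"
  using assms by (auto simp: mismatches_def nth_list_update)

lemma hamming_dist_flip:
  assumes "j < length v"
  shows "hamming_dist (v[j := \<not> v ! j]) c =
    (if v ! j = c ! j then Suc (hamming_dist v c) else hamming_dist v c - 1)"
proof -
  have "j \<in> mismatches v c \<longleftrightarrow> v ! j \<noteq> c ! j"
    using assms by (simp add: mismatches_def)
  then show ?thesis
    unfolding hamming_dist_def mismatches_flip[OF assms] by simp
qed

lemma hamming1_flip: "j < length v \<Longrightarrow> hamming1 v (v[j := \<not> v ! j])"
  using hamming_dist_flip[of j v v] hamming_dist_commute[of v "v[j := \<not> v ! j]"]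
  by (simp add: hamming1_iff)

text \<open>The cops within distance 2 of \<open>v\<close> block at most \<open>2 * length C\<close> coordinates; flipping an
  unblocked one increases the distance to each of them.\<close>
lemma flip_escapes:
  fixes v :: "bool list"
  assumes P: "P \<subseteq> {..<length v}" "2 * length C < card P"
    and cops: "\<forall>c\<in>set C. length c = length v \<and> c \<noteq> v"
  shows "\<exists>j\<in>P. \<forall>c\<in>set C. 2 \<le> hamming_dist (v[j := \<not> v ! j]) c"
proof -
  define near where "near = {c \<in> set C. hamming_dist v c \<le> 2}"
  define B where "B = (\<Union>c\<in>near. mismatches v c)"
  have "card B \<le> (\<Sum>c\<in>near. card (mismatches v c))"
    unfolding B_def by (rule card_UN_le) (simp add: near_def)
  also have "\<dots> \<le> card near * 2"
    using sum_bounded_above[of near "\<lambda>c. card (mismatches v c)" 2]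
    by (simp add: near_def hamming_dist_def)
  also have "\<dots> \<le> length C * 2"
    using card_mono[of "set C" near] card_length[of C] by (simp add: near_def)
  finally have "card B < card P" using P(2) by simp
  moreover have "finite B" by (simp add: B_def near_def)
  ultimately have "\<not> P \<subseteq> B" using card_mono not_le by metis
  then obtain j where "j \<in> P" "j \<notin> B" by blast
  then have j: "j < length v" using P(1) by blast
  have "2 \<le> hamming_dist (v[j := \<not> v ! j]) c" if "c \<in> set C" for c
  proof (cases "c \<in> near")
    case True
    then have "v ! j = c ! j"
      using \<open>j \<notin> B\<close> \<open>j \<in> P\<close> P(1) by (auto simp: B_def mismatches_def)
    moreover have "0 < hamming_dist v c"
      using cops that by (metis hamming_dist_pos)
    ultimately show ?thesis
      using hamming_dist_flip[OF j, of c] by simp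
  next
    case False
    then show ?thesis
      using that hamming_dist_flip[OF j, of c] by (auto simp: near_def)
  qed
  then show ?thesis using \<open>j \<in> P\<close> by blast
qed

definition cube_coords :: "nat \<Rightarrow> nat set" where
  "cube_coords n = {i. even i \<and> Suc i < n}"

definition even_cube :: "nat \<Rightarrow> bool list set" where
  "even_cube n = {x. length x = n \<and> (\<forall>i<n. x ! i \<longrightarrow> i \<in> cube_coords n)}"

lemma card_cube_coords: "card (cube_coords n) = n div 2"
proof -
  have "cube_coords n = (\<lambda>i. 2 * i) ` {..<n div 2}"
    by (auto simp: cube_coords_def image_iff elim!: evenE)
  then show ?thesis
    by (simp add: card_image inj_on_def)
qed

lemma cube_coords_less: "cube_coords n \<subseteq> {..<n}"
  by (auto simp: cube_coords_def)

lemma flip_in_even_cube: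
  "x \<in> even_cube n \<Longrightarrow> j \<in> cube_coords n \<Longrightarrow> x[j := \<not> x ! j] \<in> even_cube n"
  by (auto simp: even_cube_def) (metis nth_list_update_neq)

lemma replicate_False_in_even_cube: "replicate n False \<in> even_cube n"
  by (simp add: even_cube_def)

lemma even_cube_subset_lucas_vertices:
  assumes "1 \<le> n"
  shows "even_cube n \<subseteq> lucas_vertices n"
proof
  fix x assume "x \<in> even_cube n"
  then have "length x = n" and ones: "\<And>i. i < n \<Longrightarrow> x ! i \<Longrightarrow> even i \<and> Suc i < n"
    by (auto simp: even_cube_def cube_coords_def)
  moreover have "\<not> (x ! i \<and> x ! (i + 1))" if "i + 1 < n" for i
    using ones[of i] ones[of "i + 1"] that by auto
  moreover have "\<not> (x ! 0 \<and> x ! (n - 1))"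
    using ones[of "n - 1"] assms by auto
  ultimately show "x \<in> lucas_vertices n"
    by (simp add: lucas_vertices_def fib_vertices_def)
qed

lemma lucas_vertices_subset_fib_vertices: "lucas_vertices n \<subseteq> fib_vertices n"
  by (auto simp: lucas_vertices_def)

lemma fib_vertices_length: "fib_vertices n \<subseteq> {x. length x = n}"
  by (auto simp: fib_vertices_def)

text \<open>The \<open>i\<close>-th cop is avoided by disagreeing with it at the coordinates \<open>4i\<close> and \<open>4i + 2\<close>.\<close>
lemma even_cube_far_from:
  fixes C :: "bool list list"
  assumes "4 * length C \<le> n" and "\<forall>c\<in>set C. length c = n"
  shows "\<exists>v\<in>even_cube n. \<forall>c\<in>set C. 2 \<le> hamming_dist v c"
proof -
  define v where
    "v = map (\<lambda>p. if even p \<and> p div 4 < length C then \<not> C ! (p div 4) ! p else False) [0..<n]"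
  have length_v: "length v = n"
    by (simp add: v_def)
  have v_nth: "v ! p = (even p \<and> p div 4 < length C \<and> \<not> C ! (p div 4) ! p)" if "p < n" for p
    using that by (auto simp: v_def)
  have "v \<in> even_cube n"
    using assms(1) by (auto simp: even_cube_def cube_coords_def v_def)
  moreover have "2 \<le> hamming_dist v (C ! i)" if "i < length C" for i
  proof -
    have "4 * i + 2 < n" using that assms(1) by linarith
    moreover have "(4 * i) div 4 = i" "(4 * i + 2) div 4 = i" by simp_all
    ultimately have "{4 * i, 4 * i + 2} \<subseteq> mismatches v (C ! i)"
      using that by (auto simp: mismatches_def v_nth length_v)
    then have "card {4 * i, 4 * i + 2} \<le> hamming_dist v (C ! i)"
      unfolding hamming_dist_def by (rule card_mono[rotated]) simp
    then show ?thesis by simp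
  qed
  ultimately show ?thesis
    by (metis in_set_conv_nth)
qed

definition safe_position :: "nat \<Rightarrow> bool list list \<Rightarrow> bool list \<Rightarrow> bool" where
  "safe_position n C r \<longleftrightarrow> r \<in> even_cube n \<and> 2 * length C < n div 2
    \<and> (\<forall>c\<in>set C. length c = n \<and> 2 \<le> hamming_dist r c)"

lemma safe_position_start:
  assumes "2 * length C < n div 2" and "\<forall>c\<in>set C. length c = n"
  shows "\<exists>r\<in>even_cube n. safe_position n C r"
proof -
  have "4 * length C \<le> n"
    using assms(1) by linarith
  then show ?thesis
    using even_cube_far_from assms by (simp add: safe_position_def)
qed

lemma safe_position_not_caught: "safe_position n C r \<Longrightarrow> r \<notin> set C"
  by (fastforce simp: safe_position_def)

lemma safe_position_step:
  assumes safe: "safe_position n C r" and cube: "even_cube n \<subseteq> V"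
    and step: "list_all2 (\<lambda>c c'. c' = c \<or> induced_cube_adj V c c') C C'"
  shows "r \<notin> set C' \<and> (\<exists>r'. (r' = r \<or> induced_cube_adj V r r') \<and> safe_position n C' r')"
proof -
  from safe have r: "r \<in> even_cube n" "length r = n"
    and far: "\<And>c. c \<in> set C \<Longrightarrow> length c = n \<and> 2 \<le> hamming_dist r c"
    by (auto simp: safe_position_def even_cube_def)
  from safe step have "2 * length C' < n div 2"
    by (simp add: safe_position_def list_all2_lengthD)
  have cops': "length c' = n \<and> c' \<noteq> r" if c': "c' \<in> set C'" for c'
  proof -
    obtain c where "c \<in> set C" "c' = c \<or> hamming1 c c'"
      using list_all2_set2_ex[OF step c'] by (auto simp: induced_cube_adj_def)
    moreover from this(2) have "hamming_dist c' c \<le> 1"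
      by (rule hamming_dist_le_1_if_step)
    ultimately show ?thesis
      using far by (fastforce simp: hamming1_def)
  qed
  obtain j where "j \<in> cube_coords n" and far': "\<forall>c'\<in>set C'. 2 \<le> hamming_dist (r[j := \<not> r ! j]) c'"
    using flip_escapes[of "cube_coords n" r C'] cops' r(2) cube_coords_less
      \<open>2 * length C' < n div 2\<close> by (auto simp: card_cube_coords)
  moreover from this(1) have "j < length r"
    using cube_coords_less r(2) by blast
  ultimately have "r[j := \<not> r ! j] \<in> even_cube n" "hamming1 r (r[j := \<not> r ! j])"
    by (simp_all add: flip_in_even_cube[OF r(1)] hamming1_flip)
  then have "induced_cube_adj V r (r[j := \<not> r ! j])" and "safe_position n C' (r[j := \<not> r ! j])"
    using r(1) cube cops' far' \<open>2 * length C' < n div 2\<close>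
    by (auto simp: induced_cube_adj_def safe_position_def)
  then show ?thesis
    using cops' by blast
qed

lemma not_cops_win_if_even_cube_subset:
  assumes cube: "even_cube n \<subseteq> V" and lengths: "V \<subseteq> {x. length x = n}"
    and "2 * k < n div 2"
  shows "\<not> cops_win V (induced_cube_adj V) k"
proof (rule not_cops_win_if_invariant[where I = "safe_position n"])
  fix C :: "bool list list"
  assume "length C = k" "set C \<subseteq> V"
  then have "2 * length C < n div 2" "\<forall>c\<in>set C. length c = n"
    using \<open>2 * k < n div 2\<close> lengths by auto
  then show "\<exists>r\<in>V. safe_position n C r"
    using safe_position_start cube by blast
next
  show "r \<notin> set C" if "safe_position n C r" for C r
    using that by (rule safe_position_not_caught)
next
  show "r \<notin> set C' \<and> (\<exists>r'. (r' = r \<or> induced_cube_adj V r r') \<and> safe_position n C' r')"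
    if "safe_position n C r" "list_all2 (\<lambda>c c'. c' = c \<or> induced_cube_adj V c c') C C'" for C C' r
    using that(1) cube that(2) by (rule safe_position_step)
qed

lemma cop_number_ge_if_even_cube_subset:
  assumes "1 \<le> n" and "even_cube n \<subseteq> V" and "V \<subseteq> {x. length x = n}"
  shows "(n + 5) div 6 \<le> cop_number V (induced_cube_adj V)"
proof -
  have "finite V"
    using assms(3) finite_list_length by (rule finite_subset)
  moreover have "V \<noteq> {}"
    using assms(2) replicate_False_in_even_cube by blast
  ultimately have "1 \<le> cop_number V (induced_cube_adj V)"
    by (rule one_le_cop_number)
  moreover have "(n div 2 + 1) div 2 \<le> cop_number V (induced_cube_adj V)"
    using \<open>finite V\<close> not_cops_win_if_even_cube_subset[OF assms(2,3)] by (rule le_cop_number) linarith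
  ultimately show ?thesis
    by linarith
qed

theorem corollary3p3:
  fixes n :: nat
  assumes "n \<ge> 1"
  shows "cop_number (fib_vertices n) (induced_cube_adj (fib_vertices n)) \<ge> (n + 5) div 6
       \<and> cop_number (lucas_vertices n) (induced_cube_adj (lucas_vertices n)) \<ge> (n + 5) div 6"
  using cop_number_ge_if_even_cube_subset[OF assms] even_cube_subset_lucas_vertices[OF assms]
    lucas_vertices_subset_fib_vertices fib_vertices_length
  by (meson order_trans)

end
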